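(* Let $B_J\in\mathbb R^{n\times n}$ satisfy $\|B_J\|_1<1$ (strict diagonal dominance by columns), and let $\mathcal B$ be any splitting of $B_J$. Then $\rho(T(\mathcal B))<1$, so the associated iterative scheme converges.
   Context: For $B\in\mathbb R^{n\times n}$, a splitting of $B$ of order $d\ge1$ is an ordered $d$-tuple $\mathcal B=(B_1,\dots,B_d)$ of real $n\times n$ matrices with $B_p\neq O$ for all $p$, $\sum_{p=1}^d B_p=B$, and $B_p\circ B_q=O$ (Hadamard product) for $p\ne q$. The iteration matrix of $\mathcal B$ is the $dn\times dn$ matrix $T(\mathcal B)=(I_{dn}-\mathcal L)^{-1}\mathcal U$, where $\mathcal L,\mathcal U$ are $d\times d$ block matrices with $n\times n$ blocks, $\mathcal L_{ij}=B_j$ if $i>j$ and $O$ otherwise, $\mathcal U_{ij}=B_j$ if $i\le j$ and $O$ otherwise. $\rho$ is spectral radius, $\|\cdot\|_1$ the maximum-column-sum norm. *)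

theory Defs
  imports "Jordan_Normal_Form.Spectral_Radius" "Jordan_Normal_Form.Gauss_Jordan_Elimination"
begin

definition norm1_mat :: "real mat \<Rightarrow> real" where
  "norm1_mat A = Max ((\<lambda>j. \<Sum>i<dim_row A. \<bar>A $$ (i, j)\<bar>) ` {..<dim_col A})"

definition is_splitting :: "nat \<Rightarrow> real mat \<Rightarrow> nat \<Rightarrow> (nat \<Rightarrow> real mat) \<Rightarrow> bool" where
  "is_splitting n B d Bs \<longleftrightarrow>
     d \<ge> 1 \<and> B \<in> carrier_mat n n \<and>
     (\<forall>p<d. Bs p \<in> carrier_mat n n \<and> Bs p \<noteq> 0\<^sub>m n n) \<and>
     (\<forall>i<n. \<forall>j<n. (\<Sum>p<d. Bs p $$ (i, j)) = B $$ (i, j)) \<and>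
     (\<forall>p<d. \<forall>q<d. p \<noteq> q \<longrightarrow> (\<forall>i<n. \<forall>j<n. Bs p $$ (i, j) * Bs q $$ (i, j) = 0))"

text \<open>The dn x dn matrix built from d x d blocks of size n x n; block (I,J) is F I J.\<close>
definition block_mat :: "nat \<Rightarrow> nat \<Rightarrow> (nat \<Rightarrow> nat \<Rightarrow> real mat) \<Rightarrow> real mat" where
  "block_mat d n F = mat (d * n) (d * n) (\<lambda>(i, j). F (i div n) (j div n) $$ (i mod n, j mod n))"

definition split_L :: "nat \<Rightarrow> nat \<Rightarrow> (nat \<Rightarrow> real mat) \<Rightarrow> real mat" where
  "split_L n d Bs = block_mat d n (\<lambda>I J. if I > J then Bs J else 0\<^sub>m n n)"

definition split_U :: "nat \<Rightarrow> nat \<Rightarrow> (nat \<Rightarrow> real mat) \<Rightarrow> real mat" where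
  "split_U n d Bs = block_mat d n (\<lambda>I J. if I \<le> J then Bs J else 0\<^sub>m n n)"

text \<open>Iteration matrix T = (I - L)^{-1} U (I - L is unit block lower triangular, hence invertible).\<close>
definition iter_mat :: "nat \<Rightarrow> nat \<Rightarrow> (nat \<Rightarrow> real mat) \<Rightarrow> real mat" where
  "iter_mat n d Bs = the (mat_inverse (1\<^sub>m (d * n) - split_L n d Bs)) * split_U n d Bs"

definition real_spectral_radius :: "real mat \<Rightarrow> real" where
  "real_spectral_radius A = spectral_radius (map_mat complex_of_real A)"

end

theory Submission
  imports Defs
begin

text \<open>Let \<open>T x = \<lambda> x\<close> with \<open>x \<noteq> 0\<close> and \<open>|\<lambda>| \<ge> 1\<close>. Then \<open>\<lambda> x = \<U> x + \<lambda> \<L> x\<close>,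
  and dividing by \<open>|\<lambda>|\<close> gives \<open>|x| \<le> (|\<U>| + |\<L>|) |x|\<close> componentwise. Every block
  column of \<open>\<L>\<close> and \<open>\<U>\<close> together contains each block \<open>B\<^sub>p\<close> exactly once and the
  \<open>B\<^sub>p\<close> have disjoint supports, so the maxima \<open>m\<^sub>i\<close> of \<open>|x|\<close> over the \<open>d\<close> copies of
  coordinate \<open>i\<close> satisfy \<open>m \<le> |B\<^sub>J| m\<close>. Summing over \<open>i\<close> gives
  \<open>\<Sum> m \<le> \<parallel>B\<^sub>J\<parallel>\<^sub>1 \<Sum> m\<close>, hence \<open>m = 0\<close> and \<open>x = 0\<close>.\<close>

lemma sum_lessThan_mult_blocks:
  fixes f :: "nat \<Rightarrow> 'a::comm_monoid_add"
  shows "(\<Sum>l<d * n. f l) = (\<Sum>J<d. \<Sum>j<n. f (J * n + j))"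
proof (induction d)
  case 0
  then show ?case by simp
next
  case (Suc d)
  have "{d * n..<d * n + n} = (\<lambda>j. d * n + j) ` {..<n}"
    by (simp add: lessThan_atLeast0 add.commute)
  then have "(\<Sum>l\<in>{d * n..<d * n + n}. f l) = (\<Sum>j<n. f (d * n + j))"
    by (simp add: sum.reindex)
  moreover have "(\<Sum>l<Suc d * n. f l) = (\<Sum>l<d * n. f l) + (\<Sum>l\<in>{d * n..<d * n + n}. f l)"
    by (simp add: sum.atLeastLessThan_concat[symmetric] lessThan_atLeast0 add.commute)
  ultimately show ?case
    using Suc by simp
qed

lemma block_index_less:
  fixes I i :: nat
  assumes "I < d" and "i < n"
  shows "I * n + i < d * n"
proof -
  have "Suc I * n \<le> d * n"
    using assms(1) by (intro mult_le_mono1) simp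
  then show ?thesis
    using assms(2) by simp
qed

lemma col_abs_sum_le_norm1_mat:
  assumes "B \<in> carrier_mat n n" and "j < n"
  shows "(\<Sum>i<n. \<bar>B $$ (i, j)\<bar>) \<le> norm1_mat B"
  unfolding norm1_mat_def using assms by (intro Max_ge) auto

lemma nonneg_subinvariant_eq_0:
  fixes m :: "nat \<Rightarrow> real"
  assumes B: "B \<in> carrier_mat n n" and norm1: "norm1_mat B < 1"
    and nonneg: "\<And>i. i < n \<Longrightarrow> 0 \<le> m i"
    and sub: "\<And>i. i < n \<Longrightarrow> m i \<le> (\<Sum>j<n. \<bar>B $$ (i, j)\<bar> * m j)"
    and "i < n"
  shows "m i = 0"
proof -
  define c where "c = norm1_mat B"
  have "(\<Sum>i<n. m i) \<le> (\<Sum>i<n. \<Sum>j<n. \<bar>B $$ (i, j)\<bar> * m j)"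
    by (intro sum_mono sub) simp
  also have "\<dots> = (\<Sum>j<n. (\<Sum>i<n. \<bar>B $$ (i, j)\<bar>) * m j)"
    by (subst sum.swap) (simp add: sum_distrib_right)
  also have "\<dots> \<le> (\<Sum>j<n. c * m j)"
    unfolding c_def using B nonneg
    by (intro sum_mono mult_right_mono col_abs_sum_le_norm1_mat) auto
  also have "\<dots> = c * (\<Sum>i<n. m i)"
    by (simp add: sum_distrib_left)
  finally have "(1 - c) * (\<Sum>i<n. m i) \<le> 0"
    by (simp add: algebra_simps)
  moreover have "0 \<le> (\<Sum>i<n. m i)"
    using nonneg by (intro sum_nonneg) simp
  ultimately have "(\<Sum>i<n. m i) = 0"
    using norm1 unfolding c_def by (simp add: mult_le_0_iff)
  then show ?thesis
    using sum_nonneg_eq_0_iff[of "{..<n}" m] nonneg \<open>i < n\<close> by simp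
qed

lemma is_splitting_pos:
  assumes "is_splitting n B d Bs"
  shows "0 < d" and "0 < n"
proof -
  show "0 < d"
    using assms unfolding is_splitting_def by simp
  with assms have "Bs 0 \<in> carrier_mat n n" and "Bs 0 \<noteq> 0\<^sub>m n n"
    unfolding is_splitting_def by auto
  then show "0 < n"
    by (metis gr0I zero_carrier_mat eq_matI carrier_matD less_nat_zero_code)
qed

lemma is_splitting_abs_sum:
  assumes S: "is_splitting n B d Bs" and "i < n" and "j < n"
  shows "(\<Sum>p<d. \<bar>Bs p $$ (i, j)\<bar>) = \<bar>B $$ (i, j)\<bar>"
proof -
  have B_sum: "B $$ (i, j) = (\<Sum>p<d. Bs p $$ (i, j))"
    using S assms unfolding is_splitting_def by auto
  show ?thesis
  proof (cases "\<forall>p<d. Bs p $$ (i, j) = 0")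
    case True
    then show ?thesis
      using B_sum by simp
  next
    case False
    then obtain q where q: "q < d" "Bs q $$ (i, j) \<noteq> 0"
      by auto
    have single: "(\<Sum>p<d. g p) = g q" if "\<And>p. p < d \<Longrightarrow> p \<noteq> q \<Longrightarrow> g p = 0"
      for g :: "nat \<Rightarrow> real"
      using q that by (subst sum.mono_neutral_right[of "{..<d}" "{q}"]) auto
    have "Bs p $$ (i, j) = 0" if "p < d" "p \<noteq> q" for p
      using S assms q that unfolding is_splitting_def by (metis mult_eq_0_iff)
    then have "(\<Sum>p<d. \<bar>Bs p $$ (i, j)\<bar>) = \<bar>Bs q $$ (i, j)\<bar>"
      and "(\<Sum>p<d. Bs p $$ (i, j)) = Bs q $$ (i, j)"
      by (simp_all add: single)
    with B_sum show ?thesis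
      by simp
  qed
qed

lemma block_mat_index:
  assumes "k < d * n" and "l < d * n"
  shows "block_mat d n F $$ (k, l) = F (k div n) (l div n) $$ (k mod n, l mod n)"
  using assms unfolding block_mat_def by simp

lemma split_L_carrier [simp]: "split_L n d Bs \<in> carrier_mat (d * n) (d * n)"
  and split_U_carrier [simp]: "split_U n d Bs \<in> carrier_mat (d * n) (d * n)"
  unfolding split_L_def split_U_def block_mat_def by simp_all

lemma split_L_index:
  assumes "k < d * n" and "l < d * n"
  shows "split_L n d Bs $$ (k, l) = (if l div n < k div n then Bs (l div n) $$ (k mod n, l mod n) else 0)"
proof -
  have "k mod n < n"
    using assms(1) by (metis mod_less_divisor gr0I mult_0_right less_nat_zero_code)
  then show ?thesis
    using assms unfolding split_L_def by (simp add: block_mat_index)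
qed

lemma split_U_index:
  assumes "k < d * n" and "l < d * n"
  shows "split_U n d Bs $$ (k, l) = (if k div n \<le> l div n then Bs (l div n) $$ (k mod n, l mod n) else 0)"
proof -
  have "k mod n < n"
    using assms(1) by (metis mod_less_divisor gr0I mult_0_right less_nat_zero_code)
  then show ?thesis
    using assms unfolding split_U_def by (simp add: block_mat_index)
qed

lemma abs_split_U_add_abs_split_L:
  assumes "k < d * n" and "l < d * n"
  shows "\<bar>split_U n d Bs $$ (k, l)\<bar> + \<bar>split_L n d Bs $$ (k, l)\<bar>
    = \<bar>Bs (l div n) $$ (k mod n, l mod n)\<bar>"
  using assms by (simp add: split_U_index split_L_index)

lemma det_one_minus_split_L: "det (1\<^sub>m (d * n) - split_L n d Bs) = 1"
proof -
  let ?A = "1\<^sub>m (d * n) - split_L n d Bs"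
  have A: "?A \<in> carrier_mat (d * n) (d * n)"
    by (simp add: minus_carrier_mat)
  have L_upper: "split_L n d Bs $$ (k, l) = 0" if "k \<le> l" "l < d * n" for k l
  proof -
    have "k < d * n" and "k div n \<le> l div n"
      using that by (simp_all add: div_le_mono)
    with that(2) show ?thesis
      by (simp add: split_L_index)
  qed
  have "det ?A = prod_list (diag_mat ?A)"
    using L_upper by (intro det_lower_triangular[OF _ A]) (simp add: carrier_matD[OF split_L_carrier])
  also have "diag_mat ?A = replicate (d * n) 1"
    using L_upper by (intro nth_equalityI) (auto simp: diag_mat_def carrier_matD[OF split_L_carrier])
  finally show ?thesis
    by simp
qed

lemma iter_mat_eq_inverse_mult:
  obtains Ainv where "Ainv \<in> carrier_mat (d * n) (d * n)"
    and "(1\<^sub>m (d * n) - split_L n d Bs) * Ainv = 1\<^sub>m (d * n)"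
    and "iter_mat n d Bs = Ainv * split_U n d Bs"
proof -
  let ?A = "1\<^sub>m (d * n) - split_L n d Bs"
  have A: "?A \<in> carrier_mat (d * n) (d * n)"
    by (simp add: minus_carrier_mat)
  obtain Ainv where Ainv: "mat_inverse ?A = Some Ainv"
    using mat_inverse(1)[OF A] det_non_zero_imp_unit[OF A] det_one_minus_split_L by fastforce
  with mat_inverse(2)[OF A Ainv] show ?thesis
    by (intro that) (auto simp: iter_mat_def)
qed

lemma eigenvector_of_inverse_mult:
  fixes A Ainv U :: "real mat"
  assumes A: "A \<in> carrier_mat N N" and Ainv: "Ainv \<in> carrier_mat N N" and U: "U \<in> carrier_mat N N"
    and inv: "A * Ainv = 1\<^sub>m N" and v: "v \<in> carrier_vec N"
    and eigen: "map_mat complex_of_real (Ainv * U) *\<^sub>v v = ev \<cdot>\<^sub>v v"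
  shows "map_mat complex_of_real U *\<^sub>v v = ev \<cdot>\<^sub>v (map_mat complex_of_real A *\<^sub>v v)"
proof -
  let ?c = "map_mat complex_of_real"
  have "U = A * (Ainv * U)"
    using assoc_mult_mat[OF A Ainv U] inv U by simp
  then have "?c U = ?c A * ?c (Ainv * U)"
    using of_real_hom.mat_hom_mult[OF A] Ainv U by (metis mult_carrier_mat)
  then have "?c U *\<^sub>v v = ?c A *\<^sub>v (?c (Ainv * U) *\<^sub>v v)"
    using assoc_mult_mat_vec[of "?c A" N N "?c (Ainv * U)" N v] A Ainv U v by simp
  also have "\<dots> = ev \<cdot>\<^sub>v (?c A *\<^sub>v v)"
    using eigen mult_mat_vec[of "?c A" N N v ev] A v by simp
  finally show ?thesis .
qed

lemma norm_le_row_sum_of_generalized_eigenvector: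
  fixes U L :: "real mat" and v :: "complex vec"
  assumes U: "U \<in> carrier_mat N N" and L: "L \<in> carrier_mat N N" and v: "v \<in> carrier_vec N"
    and eigen: "map_mat complex_of_real U *\<^sub>v v = ev \<cdot>\<^sub>v (map_mat complex_of_real (1\<^sub>m N - L) *\<^sub>v v)"
    and ev: "1 \<le> norm ev" and k: "k < N"
  shows "norm (v $ k) \<le> (\<Sum>l<N. (\<bar>U $$ (k, l)\<bar> + \<bar>L $$ (k, l)\<bar>) * norm (v $ l))"
proof -
  define SU where "SU = (\<Sum>l<N. complex_of_real (U $$ (k, l)) * v $ l)"
  define SL where "SL = (\<Sum>l<N. complex_of_real (L $$ (k, l)) * v $ l)"
  have "(map_mat complex_of_real U *\<^sub>v v) $ k = SU"
    using U v k unfolding SU_def by (simp add: scalar_prod_def lessThan_atLeast0)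
  moreover have "(map_mat complex_of_real (1\<^sub>m N - L) *\<^sub>v v) $ k = v $ k - SL"
    using L v k unfolding SL_def
    by (simp add: scalar_prod_def lessThan_atLeast0 left_diff_distrib sum_subtractf
        if_distrib[of "\<lambda>x. complex_of_real x * _"] sum.delta cong: if_cong)
  ultimately have "ev * v $ k = SU + ev * SL"
    using arg_cong[OF eigen, of "\<lambda>w. w $ k"] L v k by (simp add: algebra_simps)
  then have "norm ev * norm (v $ k) \<le> norm SU + norm ev * norm SL"
    by (metis norm_mult norm_triangle_ineq)
  also have "\<dots> \<le> norm ev * (\<Sum>l<N. \<bar>U $$ (k, l)\<bar> * norm (v $ l))
      + norm ev * (\<Sum>l<N. \<bar>L $$ (k, l)\<bar> * norm (v $ l))"
  proof (rule add_mono)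
    have "norm SU \<le> (\<Sum>l<N. \<bar>U $$ (k, l)\<bar> * norm (v $ l))"
      unfolding SU_def by (rule order_trans[OF norm_sum]) (simp add: norm_mult)
    also have "\<dots> \<le> norm ev * (\<Sum>l<N. \<bar>U $$ (k, l)\<bar> * norm (v $ l))"
      using mult_right_mono[OF ev, of "\<Sum>l<N. \<bar>U $$ (k, l)\<bar> * norm (v $ l)"] by (simp add: sum_nonneg)
    finally show "norm SU \<le> norm ev * (\<Sum>l<N. \<bar>U $$ (k, l)\<bar> * norm (v $ l))" .
    have "norm SL \<le> (\<Sum>l<N. \<bar>L $$ (k, l)\<bar> * norm (v $ l))"
      unfolding SL_def by (rule order_trans[OF norm_sum]) (simp add: norm_mult)
    then show "norm ev * norm SL \<le> norm ev * (\<Sum>l<N. \<bar>L $$ (k, l)\<bar> * norm (v $ l))"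
      by (simp add: mult_left_mono)
  qed
  also have "\<dots> = norm ev * (\<Sum>l<N. (\<bar>U $$ (k, l)\<bar> + \<bar>L $$ (k, l)\<bar>) * norm (v $ l))"
    by (simp add: distrib_left distrib_right sum.distrib)
  finally show ?thesis
    by (rule mult_left_le_imp_le) (use ev in linarith)
qed

definition block_max :: "nat \<Rightarrow> nat \<Rightarrow> 'a::real_normed_vector vec \<Rightarrow> nat \<Rightarrow> real" where
  "block_max d n v i = Max ((\<lambda>I. norm (v $ (I * n + i))) ` {..<d})"

lemma norm_le_block_max: "I < d \<Longrightarrow> norm (v $ (I * n + i)) \<le> block_max d n v i"
  unfolding block_max_def by (intro Max_ge) auto

lemma block_max_nonneg: "0 < d \<Longrightarrow> 0 \<le> block_max d n v i"
  using norm_le_block_max[of 0 d v n i] by (meson norm_ge_zero order_trans)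

lemma block_max_subinvariant:
  fixes v :: "'a::real_normed_vector vec"
  assumes S: "is_splitting n B d Bs" and i: "i < n"
    and row: "\<And>k. k < d * n \<Longrightarrow>
      norm (v $ k) \<le> (\<Sum>l<d * n. \<bar>Bs (l div n) $$ (k mod n, l mod n)\<bar> * norm (v $ l))"
  shows "block_max d n v i \<le> (\<Sum>j<n. \<bar>B $$ (i, j)\<bar> * block_max d n v j)"
proof -
  have "norm (v $ (I * n + i)) \<le> (\<Sum>j<n. \<bar>B $$ (i, j)\<bar> * block_max d n v j)" if I: "I < d" for I
  proof -
    have "norm (v $ (I * n + i))
        \<le> (\<Sum>l<d * n. \<bar>Bs (l div n) $$ ((I * n + i) mod n, l mod n)\<bar> * norm (v $ l))"
      by (rule row[OF block_index_less[OF I i]])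
    also have "\<dots> = (\<Sum>J<d. \<Sum>j<n. \<bar>Bs J $$ (i, j)\<bar> * norm (v $ (J * n + j)))"
      unfolding sum_lessThan_mult_blocks using i by (intro sum.cong refl) simp
    also have "\<dots> \<le> (\<Sum>J<d. \<Sum>j<n. \<bar>Bs J $$ (i, j)\<bar> * block_max d n v j)"
      by (intro sum_mono mult_left_mono norm_le_block_max) auto
    also have "\<dots> = (\<Sum>j<n. (\<Sum>J<d. \<bar>Bs J $$ (i, j)\<bar>) * block_max d n v j)"
      by (subst sum.swap) (simp add: sum_distrib_right)
    also have "\<dots> = (\<Sum>j<n. \<bar>B $$ (i, j)\<bar> * block_max d n v j)"
      using is_splitting_abs_sum[OF S i] by simp
    finally show ?thesis .
  qed
  moreover have "{..<d} \<noteq> {}"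
    using is_splitting_pos(1)[OF S] by auto
  ultimately show ?thesis
    unfolding block_max_def[of d n v i] by (intro Max.boundedI) auto
qed

lemma block_max_eq_0_imp_zero:
  assumes v: "v \<in> carrier_vec (d * n)" and zero: "\<And>i. i < n \<Longrightarrow> block_max d n v i = 0"
  shows "v = 0\<^sub>v (d * n)"
proof (rule eq_vecI)
  fix k
  assume "k < dim_vec (0\<^sub>v (d * n))"
  then have k: "k < d * n"
    by simp
  then have "0 < n"
    by (metis gr0I mult_0_right less_nat_zero_code)
  have "norm (v $ (k div n * n + k mod n)) \<le> block_max d n v (k mod n)"
    using k by (intro norm_le_block_max) (simp add: less_mult_imp_div_less)
  with zero[of "k mod n"] \<open>0 < n\<close> k show "v $ k = 0\<^sub>v (d * n) $ k"
    by simp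
qed (use v in simp)

lemma norm_eigenvalue_iter_mat_less_1:
  assumes S: "is_splitting n B d Bs" and norm1: "norm1_mat B < 1"
    and ev: "eigenvalue (map_mat complex_of_real (iter_mat n d Bs)) ev"
  shows "norm ev < 1"
proof (rule ccontr)
  assume "\<not> norm ev < 1"
  then have ev1: "1 \<le> norm ev"
    by simp
  let ?N = "d * n" and ?L = "split_L n d Bs" and ?U = "split_U n d Bs"
  obtain Ainv where Ainv: "Ainv \<in> carrier_mat ?N ?N" "(1\<^sub>m ?N - ?L) * Ainv = 1\<^sub>m ?N"
    and T: "iter_mat n d Bs = Ainv * ?U"
    by (rule iter_mat_eq_inverse_mult)
  from ev obtain v where v: "v \<in> carrier_vec ?N" "v \<noteq> 0\<^sub>v ?N"
    and eigen: "map_mat complex_of_real (Ainv * ?U) *\<^sub>v v = ev \<cdot>\<^sub>v v"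
    unfolding eigenvalue_def eigenvector_def T using Ainv(1) by auto
  have gen: "map_mat complex_of_real ?U *\<^sub>v v
      = ev \<cdot>\<^sub>v (map_mat complex_of_real (1\<^sub>m ?N - ?L) *\<^sub>v v)"
    by (rule eigenvector_of_inverse_mult[OF _ Ainv(1) split_U_carrier Ainv(2) v(1) eigen])
      (simp add: minus_carrier_mat)
  have row: "norm (v $ k) \<le> (\<Sum>l<?N. \<bar>Bs (l div n) $$ (k mod n, l mod n)\<bar> * norm (v $ l))"
    if "k < ?N" for k
  proof -
    have "norm (v $ k) \<le> (\<Sum>l<?N. (\<bar>?U $$ (k, l)\<bar> + \<bar>?L $$ (k, l)\<bar>) * norm (v $ l))"
      by (rule norm_le_row_sum_of_generalized_eigenvector[OF split_U_carrier split_L_carrier v(1) gen ev1 that])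
    also have "\<dots> = (\<Sum>l<?N. \<bar>Bs (l div n) $$ (k mod n, l mod n)\<bar> * norm (v $ l))"
      using that by (intro sum.cong) (simp_all add: abs_split_U_add_abs_split_L)
    finally show ?thesis .
  qed
  have B: "B \<in> carrier_mat n n"
    using S unfolding is_splitting_def by simp
  have "block_max d n v i = 0" if "i < n" for i
    using nonneg_subinvariant_eq_0[OF B norm1 _ block_max_subinvariant[OF S _ row] that]
      block_max_nonneg[OF is_splitting_pos(1)[OF S]] by blast
  with v(1) have "v = 0\<^sub>v ?N"
    by (rule block_max_eq_0_imp_zero)
  with v(2) show False ..
qed

theorem proposition4p2:
  fixes n d :: nat and BJ :: "real mat" and Bs :: "nat \<Rightarrow> real mat"
  assumes "BJ \<in> carrier_mat n n"
    and "norm1_mat BJ < 1"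
    and "is_splitting n BJ d Bs"
  shows "real_spectral_radius (iter_mat n d Bs) < 1"
proof -
  let ?T = "map_mat complex_of_real (iter_mat n d Bs)"
  obtain Ainv where "Ainv \<in> carrier_mat (d * n) (d * n)" and "iter_mat n d Bs = Ainv * split_U n d Bs"
    by (rule iter_mat_eq_inverse_mult)
  then have "?T \<in> carrier_mat (d * n) (d * n)"
    by simp
  moreover have "0 < d * n"
    using is_splitting_pos[OF assms(3)] by simp
  ultimately obtain ev where "real_spectral_radius (iter_mat n d Bs) = norm ev" and "eigenvalue ?T ev"
    using spectral_radius_mem_max(1) unfolding real_spectral_radius_def spectrum_def by blast
  with norm_eigenvalue_iter_mat_less_1[OF assms(3,2)] show ?thesis
    by simp
qed

end
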